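(* Let $\mathcal{B}$ be a real Banach space having a pre-dual space $\mathcal{B}_*$, let $\nu_j\in\mathcal{B}_*$, $j\in\mathbb{N}_m$, be linearly independent and let $\mathbf{y}\in\mathbb{R}^m$. Then $\hat f\in\mathcal{B}$ is a solution of the minimum norm interpolation problem with data $\mathbf{y}$ if and only if $\hat f\in\mathcal{M}_{\mathbf{y}}$ and there exist $c_j\in\mathbb{R}$, $j\in\mathbb{N}_m$, such that $$\hat f\in\gamma\,\partial\|\cdot\|_{\mathcal{B}_*}\Big(\sum_{j\in\mathbb{N}_m}c_j\nu_j\Big),\qquad \gamma:=\Big\|\sum_{j\in\mathbb{N}_m}c_j\nu_j\Big\|_{\mathcal{B}_*}.$$
   Context: $\mathcal{B}$ is a real Banach space with dual $\mathcal{B}^*$ and pairing $\langle\nu,f\rangle_{\mathcal{B}}:=\nu(f)$; $\mathbb{N}_m:=\{1,\dots,m\}$; $\mathcal{L}(f):=[\langle\nu_j,f\rangle_{\mathcal{B}}:j\in\mathbb{N}_m]$, $\mathcal{M}_{\mathbf{y}}:=\{f\in\mathcal{B}:\mathcal{L}(f)=\mathbf{y}\}$; a solution of the minimum norm interpolation problem with data $\mathbf{y}$ is an $\hat f\in\mathcal{M}_{\mathbf{y}}$ with $\|\hat f\|_{\mathcal{B}}=\inf\{\|f\|_{\mathcal{B}}:f\in\mathcal{M}_{\mathbf{y}}\}$. A normed space $\mathcal{B}_*$ is a pre-dual space of $\mathcal{B}$ if $(\mathcal{B}_* )^*=\mathcal{B}$; $\mathcal{B}_*$ is regarded as a subspace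 of $\mathcal{B}^*$ via $\langle\nu,f\rangle_{\mathcal{B}}=\langle f,\nu\rangle_{\mathcal{B}_*}=f(\nu)$. For a convex $\phi$ on a real normed space $X$, $\partial\phi(x):=\{\mu\in X^*:\phi(z)-\phi(x)\ge\mu(z-x)\ \forall z\in X\}$; thus $\partial\|\cdot\|_{\mathcal{B}_*}(\nu)\subseteq\mathcal{B}$. *)

theory Defs
  imports "HOL-Analysis.Analysis"
begin

definition subdiff :: "('a::real_normed_vector \<Rightarrow> real) \<Rightarrow> 'a \<Rightarrow> ('a \<Rightarrow>\<^sub>L real) set" where
  "subdiff phi x = {mu. \<forall>z. phi z - phi x \<ge> blinfun_apply mu (z - x)}"

text \<open>B is identified with the dual of its pre-dual 'p through an isometric linear
  bijection J; the pairing of nu in the pre-dual with f in B is (J f) nu.\<close>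
definition predual_iso :: "('b::banach \<Rightarrow> ('p::real_normed_vector \<Rightarrow>\<^sub>L real)) \<Rightarrow> bool" where
  "predual_iso J \<longleftrightarrow> linear J \<and> bij J \<and> (\<forall>f. norm (J f) = norm f)"

definition interp_set ::
  "('b \<Rightarrow> ('p \<Rightarrow>\<^sub>L real)) \<Rightarrow> (nat \<Rightarrow> 'p::real_normed_vector) \<Rightarrow> nat \<Rightarrow> (nat \<Rightarrow> real) \<Rightarrow> 'b set" where
  "interp_set J nu m y = {f. \<forall>j\<in>{1..m}. blinfun_apply (J f) (nu j) = y j}"

definition is_mni_solution ::
  "('b::real_normed_vector \<Rightarrow> ('p::real_normed_vector \<Rightarrow>\<^sub>L real)) \<Rightarrow> (nat \<Rightarrow> 'p) \<Rightarrow> nat \<Rightarrow> (nat \<Rightarrow> real) \<Rightarrow> 'b \<Rightarrow> bool" where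
  "is_mni_solution J nu m y f \<longleftrightarrow>
     f \<in> interp_set J nu m y \<and> norm f = Inf (norm ` interp_set J nu m y)"

end

theory Submission
  imports Defs
begin

text \<open>
  Sufficiency is a two-line estimate: if \<open>J f = \<parallel>v\<parallel> \<mu>\<close> with \<open>\<mu>\<close> a subgradient of the
  norm at \<open>v = \<Sum> c\<^sub>j \<nu>\<^sub>j\<close>, then \<open>\<parallel>\<mu>\<parallel> \<le> 1\<close> and \<open>\<mu> v = \<parallel>v\<parallel>\<close>, so \<open>\<parallel>f\<parallel> \<le> \<parallel>v\<parallel>\<close>, while for every
  interpolant \<open>h\<close> we have \<open>\<parallel>v\<parallel>\<^sup>2 = (J f) v = (J h) v \<le> \<parallel>h\<parallel> \<parallel>v\<parallel>\<close>.

  For necessity, let \<open>s\<close> be the norm of \<open>J f\<close> restricted to \<open>V = span {\<nu>\<^sub>j}\<close>. By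
  Hahn--Banach the restriction extends to a functional of norm \<open>s\<close>, which is \<open>J h\<close> for
  an interpolant \<open>h\<close>; minimality gives \<open>\<parallel>f\<parallel> \<le> s\<close>, hence \<open>s = \<parallel>J f\<parallel>\<close>. Since \<open>V\<close> is
  finite-dimensional its unit ball is compact, so \<open>s\<close> is attained at some unit vector
  \<open>v\<^sub>0 \<in> V\<close>; then the coefficients of \<open>\<parallel>f\<parallel> v\<^sub>0\<close> and \<open>\<mu> = J f / \<parallel>f\<parallel>\<close> do the job.
\<close>

section \<open>The Hahn--Banach theorem\<close>

text \<open>Partial linear functionals on \<open>'a\<close> are handled through their graphs, which are
  subspaces of \<open>'a \<times> real\<close>; Zorn's lemma is applied to dominated such graphs.\<close>

lemma dominated_extension_value:
  fixes p :: "'a::real_vector \<Rightarrow> real"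
  assumes sub: "\<And>x y. p (x + y) \<le> p x + p y"
    and M: "subspace M" and dom: "\<forall>(x, a)\<in>M. a \<le> p x"
  obtains c where "\<And>u a. (u, a) \<in> M \<Longrightarrow> a - c \<le> p (u - x0)"
    and "\<And>u a. (u, a) \<in> M \<Longrightarrow> a + c \<le> p (u + x0)"
proof -
  define L where "L = {a - p (u - x0) | u a. (u, a) \<in> M}"
  have key: "a - p (u - x0) \<le> p (v + x0) - b" if "(u, a) \<in> M" "(v, b) \<in> M" for u a v b
  proof -
    have "a + b \<le> p (u + v)"
      using dom subspace_add[OF M that] by auto
    also have "\<dots> \<le> p (u - x0) + p (v + x0)"
      using sub[of "u - x0" "v + x0"] by simp
    finally show ?thesis by simp
  qed
  have "(0, 0) \<in> M" using subspace_0[OF M] by (simp add: zero_prod_def)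
  then have "L \<noteq> {}" and "bdd_above L"
    unfolding L_def bdd_above_def using key by blast+
  show thesis
  proof
    show "a - Sup L \<le> p (u - x0)" if "(u, a) \<in> M" for u a
    proof -
      have "a - p (u - x0) \<le> Sup L"
        by (rule cSup_upper[OF _ \<open>bdd_above L\<close>]) (use that L_def in blast)
      then show ?thesis by simp
    qed
    show "a + Sup L \<le> p (u + x0)" if "(u, a) \<in> M" for u a
    proof -
      have "Sup L \<le> p (u + x0) - a"
        by (rule cSup_least[OF \<open>L \<noteq> {}\<close>]) (use that key L_def in blast)
      then show ?thesis by simp
    qed
  qed
qed

lemma dominated_extension_value_scaled:
  fixes p :: "'a::real_vector \<Rightarrow> real"
  assumes hom: "\<And>t x. t \<ge> 0 \<Longrightarrow> p (t *\<^sub>R x) = t * p x"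
    and M: "subspace M" and dom: "\<forall>(x, a)\<in>M. a \<le> p x"
    and below: "\<And>u a. (u, a) \<in> M \<Longrightarrow> a - c \<le> p (u - x0)"
    and above: "\<And>u a. (u, a) \<in> M \<Longrightarrow> a + c \<le> p (u + x0)"
    and uM: "(u, a) \<in> M"
  shows "a + t * c \<le> p (u + t *\<^sub>R x0)"
proof -
  consider "t = 0" | "t > 0" | "t < 0" by linarith
  then show ?thesis
  proof cases
    case 1
    then show ?thesis using dom uM by auto
  next
    case 2
    have "inverse t * a + c \<le> p (inverse t *\<^sub>R u + x0)"
      using above subspace_scale[OF M uM, of "inverse t"] by simp
    then have "t * (inverse t * a + c) \<le> t * p (inverse t *\<^sub>R u + x0)"
      using 2 by (simp add: mult_left_mono)
    also have "\<dots> = p (u + t *\<^sub>R x0)"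
      using 2 hom[of t "inverse t *\<^sub>R u + x0"] by (simp add: scaleR_add_right)
    finally show ?thesis using 2 by (simp add: algebra_simps)
  next
    case 3
    have "- inverse t * a - c \<le> p (- inverse t *\<^sub>R u - x0)"
      using below subspace_scale[OF M uM, of "- inverse t"] by simp
    then have "- t * (- inverse t * a - c) \<le> - t * p (- inverse t *\<^sub>R u - x0)"
      using 3 by (simp add: mult_left_mono)
    also have "\<dots> = p (u + t *\<^sub>R x0)"
      using 3 hom[of "- t" "- inverse t *\<^sub>R u - x0"] by (simp add: scaleR_diff_right)
    finally show ?thesis using 3 by (simp add: algebra_simps)
  qed
qed

lemma dominated_subspace_extend:
  fixes p :: "'a::real_vector \<Rightarrow> real"
  assumes sub: "\<And>x y. p (x + y) \<le> p x + p y"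
    and hom: "\<And>t x. t \<ge> 0 \<Longrightarrow> p (t *\<^sub>R x) = t * p x"
    and M: "subspace M" and dom: "\<forall>(x, a)\<in>M. a \<le> p x"
  obtains M' a0 where "subspace M'" "M \<subseteq> M'" "\<forall>(x, a)\<in>M'. a \<le> p x" "(x0, a0) \<in> M'"
proof -
  obtain c where below: "\<And>u a. (u, a) \<in> M \<Longrightarrow> a - c \<le> p (u - x0)"
    and above: "\<And>u a. (u, a) \<in> M \<Longrightarrow> a + c \<le> p (u + x0)"
    using dominated_extension_value[OF sub M dom] by blast
  define M' where "M' = {z + w | z w. z \<in> M \<and> w \<in> span {(x0, c)}}"
  have "subspace M'"
    unfolding M'_def by (intro subspace_sums M subspace_span)
  moreover have "M \<subseteq> M'"
  proof
    fix z assume "z \<in> M"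
    then show "z \<in> M'"
      unfolding M'_def by (intro CollectI exI[of _ z] exI[of _ 0]) (simp add: span_zero)
  qed
  moreover have "(x0, c) \<in> M'"
    unfolding M'_def using subspace_0[OF M]
    by (intro CollectI exI[of _ 0] exI[of _ "(x0, c)"]) (simp add: span_base)
  moreover have "\<forall>(x, a)\<in>M'. a \<le> p x"
    using dominated_extension_value_scaled[OF hom M dom below above]
    unfolding M'_def span_singleton by auto
  ultimately show thesis
    using that by blast
qed

lemma subspace_Union_chain:
  assumes "C \<noteq> {}" and "\<And>S. S \<in> C \<Longrightarrow> subspace S"
    and chain: "\<And>S T. S \<in> C \<Longrightarrow> T \<in> C \<Longrightarrow> S \<subseteq> T \<or> T \<subseteq> S"
  shows "subspace (\<Union>C)"
  unfolding subspace_def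
proof (intro conjI ballI allI)
  show "0 \<in> \<Union>C"
    using assms(1,2) subspace_0 by blast
  show "x + y \<in> \<Union>C" if x: "x \<in> \<Union>C" and y: "y \<in> \<Union>C" for x y
  proof -
    obtain S T where "S \<in> C" "x \<in> S" "T \<in> C" "y \<in> T"
      using x y by blast
    then show ?thesis
      using chain[of S T] assms(2) subspace_add by blast
  qed
  show "c *\<^sub>R x \<in> \<Union>C" if "x \<in> \<Union>C" for c x
    using that assms(2) subspace_scale by blast
qed

lemma dominated_subspace_single_valued:
  fixes p :: "'a::real_vector \<Rightarrow> real"
  assumes "p 0 = 0" and M: "subspace M" and dom: "\<forall>(x, a)\<in>M. a \<le> p x"
    and "(x, a) \<in> M" "(x, b) \<in> M"
  shows "a = b"
proof -
  have "(0, a - b) \<in> M" "(0, b - a) \<in> M"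
    using subspace_diff[OF M assms(4,5)] subspace_diff[OF M assms(5,4)] by simp_all
  then have "a - b \<le> p 0" "b - a \<le> p 0"
    using dom by auto
  then show ?thesis
    using \<open>p 0 = 0\<close> by simp
qed

lemma subspace_graph_linear:
  fixes M :: "('a::real_vector \<times> real) set"
  assumes M: "subspace M" and total: "\<And>x. \<exists>a. (x, a) \<in> M"
    and single_valued: "\<And>x a b. (x, a) \<in> M \<Longrightarrow> (x, b) \<in> M \<Longrightarrow> a = b"
  obtains F where "linear F" "\<And>x. (x, F x) \<in> M"
proof -
  define F where "F x = (THE a. (x, a) \<in> M)" for x
  have FM: "(x, F x) \<in> M" for x
    unfolding F_def using total[of x] single_valued by (metis theI)
  have "linear F"
  proof (rule linearI)
    show "F (x + y) = F x + F y" for x y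
      using single_valued[OF FM] subspace_add[OF M FM FM, of x y] by simp
    show "F (c *\<^sub>R x) = c *\<^sub>R F x" for c x
      using single_valued[OF FM] subspace_scale[OF M FM, of c x] by simp
  qed
  with FM show thesis
    using that by blast
qed

theorem hahn_banach_dominated:
  fixes p :: "'a::real_vector \<Rightarrow> real"
  assumes sub: "\<And>x y. p (x + y) \<le> p x + p y"
    and hom: "\<And>t x. t \<ge> 0 \<Longrightarrow> p (t *\<^sub>R x) = t * p x"
    and S: "subspace S" and g: "linear g" and dom: "\<forall>x\<in>S. g x \<le> p x"
  obtains F where "linear F" "\<forall>x\<in>S. F x = g x" "\<forall>x. F x \<le> p x"
proof -
  define G0 where "G0 = (\<lambda>x. (x, g x)) ` S"
  define A where "A = {G. G0 \<subseteq> G \<and> subspace G \<and> (\<forall>(x, a)\<in>G. a \<le> p x)}"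
  have "subspace G0"
    unfolding G0_def using g by (intro linear_subspace_image S linearI) (simp_all add: linear_add linear_scale)
  then have "G0 \<in> A"
    unfolding A_def G0_def using dom by auto
  have "\<Union>C \<in> A" if "C \<noteq> {}" "subset.chain A C" for C
  proof -
    have CA: "C \<subseteq> A" and chain: "\<And>S T. S \<in> C \<Longrightarrow> T \<in> C \<Longrightarrow> S \<subseteq> T \<or> T \<subseteq> S"
      using that(2) unfolding subset_chain_def by blast+
    have "subspace (\<Union>C)"
      using subspace_Union_chain[OF that(1) _ chain] CA unfolding A_def by blast
    with that(1) CA show ?thesis
      unfolding A_def by blast
  qed
  then obtain M where "M \<in> A" and max: "\<And>X. X \<in> A \<Longrightarrow> M \<subseteq> X \<Longrightarrow> X = M"
    using subset_Zorn_nonempty[of A] \<open>G0 \<in> A\<close> by blast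
  then have M: "subspace M" and domM: "\<forall>(x, a)\<in>M. a \<le> p x" and "G0 \<subseteq> M"
    unfolding A_def by auto
  have total: "\<exists>a. (x, a) \<in> M" for x
  proof -
    obtain M' a where "subspace M'" "M \<subseteq> M'" "\<forall>(x, a)\<in>M'. a \<le> p x" "(x, a) \<in> M'"
      using dominated_subspace_extend[OF sub hom M domM] by blast
    moreover from this have "M' = M"
      using max \<open>G0 \<subseteq> M\<close> unfolding A_def by blast
    ultimately show ?thesis by blast
  qed
  have "p 0 = 0"
    using hom[of 0 0] by simp
  then have single_valued: "\<And>x a b. (x, a) \<in> M \<Longrightarrow> (x, b) \<in> M \<Longrightarrow> a = b"
    using dominated_subspace_single_valued[OF _ M domM] by blast
  obtain F where "linear F" and FM: "\<And>x. (x, F x) \<in> M"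
    using subspace_graph_linear[OF M total] single_valued by blast
  moreover have "\<forall>x\<in>S. F x = g x"
    using \<open>G0 \<subseteq> M\<close> single_valued[OF FM] unfolding G0_def by auto
  moreover have "\<forall>x. F x \<le> p x"
    using domM FM by blast
  ultimately show thesis
    using that by blast
qed

theorem hahn_banach_norm:
  fixes g :: "'a::real_normed_vector \<Rightarrow> real"
  assumes S: "subspace S" and g: "linear g" and "s \<ge> 0"
    and dom: "\<forall>x\<in>S. g x \<le> s * norm x"
  obtains \<phi> :: "'a \<Rightarrow>\<^sub>L real" where "\<forall>x\<in>S. \<phi> x = g x" "norm \<phi> \<le> s"
proof -
  have "s * norm (x + y) \<le> s * norm x + s * norm y" for x y :: 'a
    using mult_left_mono[OF norm_triangle_ineq \<open>s \<ge> 0\<close>] by (simp add: distrib_left)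
  then obtain F where F: "linear F" "\<forall>x\<in>S. F x = g x" "\<forall>x. F x \<le> s * norm x"
    using hahn_banach_dominated[of "\<lambda>x. s * norm x", OF _ _ S g dom] by auto
  have bound: "\<bar>F x\<bar> \<le> s * norm x" for x
    using F(3)[rule_format, of x] F(3)[rule_format, of "- x"] linear_neg[OF F(1), of x] by simp
  have "bounded_linear F"
    using F(1) bound by (intro bounded_linear_intro[where K=s]) (auto simp: linear_add linear_scale mult.commute)
  then have "blinfun_apply (Blinfun F) = F"
    by (rule bounded_linear_Blinfun_apply)
  moreover have "norm (Blinfun F) \<le> s"
    using bound calculation \<open>s \<ge> 0\<close> by (intro norm_blinfun_bound) auto
  ultimately show thesis
    using that[of "Blinfun F"] F(2) by simp
qed

section \<open>Compactness in finite-dimensional spans\<close>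

lemma bounded_coordinates_convergent_subseq:
  fixes x :: "nat \<Rightarrow> 'i \<Rightarrow> real"
  assumes "finite I" and "\<And>n j. j \<in> I \<Longrightarrow> \<bar>x n j\<bar> \<le> B"
  obtains r l where "strict_mono r" "\<And>j. j \<in> I \<Longrightarrow> (\<lambda>n. x (r n) j) \<longlonglongrightarrow> l j"
  using assms
proof (induction I arbitrary: thesis rule: finite_induct)
  case empty
  show ?case
    by (rule empty.prems(1)[of id]) (auto simp: strict_mono_def)
next
  case (insert a I)
  obtain r l where r: "strict_mono r" and l: "\<And>j. j \<in> I \<Longrightarrow> (\<lambda>n. x (r n) j) \<longlonglongrightarrow> l j"
    using insert.IH insert.prems(2) by blast
  have "bounded (range (\<lambda>n. x (r n) a))"
    using insert.prems(2) by (intro boundedI[where B=B]) auto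
  then obtain la s where s: "strict_mono s" and la: "((\<lambda>n. x (r n) a) \<circ> s) \<longlonglongrightarrow> la"
    using bounded_imp_convergent_subsequence by blast
  show ?case
  proof (rule insert.prems(1)[of "r \<circ> s" "l(a := la)"])
    show "strict_mono (r \<circ> s)"
      using r s by (rule strict_mono_o)
    show "(\<lambda>n. x ((r \<circ> s) n) j) \<longlonglongrightarrow> (l(a := la)) j" if "j \<in> insert a I" for j
    proof (cases "j = a")
      case True
      then show ?thesis using la by (simp add: comp_def)
    next
      case False
      then show ?thesis
        using that LIMSEQ_subseq_LIMSEQ[OF l s, of j] by (simp add: comp_def)
    qed
  qed
qed

lemma compact_lincomb_image:
  fixes nu :: "'i \<Rightarrow> 'a::real_normed_vector"
  assumes "finite I"
    and bounded: "\<And>c. P c \<Longrightarrow> (\<Sum>j\<in>I. \<bar>c j\<bar>) \<le> B"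
    and closed: "\<And>C e. (\<And>n. P (C n)) \<Longrightarrow> (\<And>j. j \<in> I \<Longrightarrow> (\<lambda>n. C n j) \<longlonglongrightarrow> e j) \<Longrightarrow> P e"
  shows "compact {(\<Sum>j\<in>I. c j *\<^sub>R nu j) | c. P c}"
  unfolding compact_eq_seq_compact_metric
proof (rule seq_compactI)
  fix x :: "nat \<Rightarrow> 'a" assume "\<forall>n. x n \<in> {(\<Sum>j\<in>I. c j *\<^sub>R nu j) | c. P c}"
  then have "\<forall>n. \<exists>c. P c \<and> x n = (\<Sum>j\<in>I. c j *\<^sub>R nu j)"
    by blast
  then obtain C where C: "\<And>n. P (C n)" and x: "\<And>n. x n = (\<Sum>j\<in>I. C n j *\<^sub>R nu j)"
    by metis
  have "\<bar>C n j\<bar> \<le> B" if "j \<in> I" for n j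
    using member_le_sum[OF that _ \<open>finite I\<close>, of "\<lambda>j. \<bar>C n j\<bar>"] bounded[OF C[of n]] by simp
  then obtain r e where r: "strict_mono r" and e: "\<And>j. j \<in> I \<Longrightarrow> (\<lambda>n. C (r n) j) \<longlonglongrightarrow> e j"
    using bounded_coordinates_convergent_subseq[OF \<open>finite I\<close>] by blast
  have "(x \<circ> r) \<longlonglongrightarrow> (\<Sum>j\<in>I. e j *\<^sub>R nu j)"
    unfolding comp_def x by (intro tendsto_sum tendsto_scaleR e tendsto_const)
  moreover have "P e"
    using closed[of "C \<circ> r" e] C e by simp
  ultimately show "\<exists>l\<in>{(\<Sum>j\<in>I. c j *\<^sub>R nu j) | c. P c}. \<exists>r. strict_mono r \<and> (x \<circ> r) \<longlonglongrightarrow> l"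
    using r by blast
qed

lemma compact_lincomb_unit_coeffs:
  fixes nu :: "'i \<Rightarrow> 'a::real_normed_vector"
  assumes "finite I"
  shows "compact {(\<Sum>j\<in>I. c j *\<^sub>R nu j) | c. (\<Sum>j\<in>I. \<bar>c j\<bar>) = 1}"
proof (rule compact_lincomb_image[OF \<open>finite I\<close>, where B=1])
  fix C :: "nat \<Rightarrow> 'i \<Rightarrow> real" and e :: "'i \<Rightarrow> real"
  assume C: "\<And>n. (\<Sum>j\<in>I. \<bar>C n j\<bar>) = 1" and e: "\<And>j. j \<in> I \<Longrightarrow> (\<lambda>n. C n j) \<longlonglongrightarrow> e j"
  have "(\<lambda>n. \<Sum>j\<in>I. \<bar>C n j\<bar>) \<longlonglongrightarrow> (\<Sum>j\<in>I. \<bar>e j\<bar>)"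
    by (auto intro!: tendsto_sum tendsto_rabs e)
  then have "(\<lambda>n. 1) \<longlonglongrightarrow> (\<Sum>j\<in>I. \<bar>e j\<bar>)"
    by (simp only: C)
  then show "(\<Sum>j\<in>I. \<bar>e j\<bar>) = 1"
    using LIMSEQ_unique[OF tendsto_const] by fastforce
qed simp

lemma lincomb_norm_lower_bound:
  fixes nu :: "'i \<Rightarrow> 'a::real_normed_vector"
  assumes "finite I" and indep: "\<And>c. (\<Sum>j\<in>I. c j *\<^sub>R nu j) = 0 \<Longrightarrow> \<forall>j\<in>I. c j = 0"
  obtains \<delta> where "\<delta> > 0" "\<And>c. \<delta> * (\<Sum>j\<in>I. \<bar>c j\<bar>) \<le> norm (\<Sum>j\<in>I. c j *\<^sub>R nu j)"
proof (cases "I = {}")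
  case True
  then show thesis using that[of 1] by simp
next
  case False
  define K where "K = {(\<Sum>j\<in>I. c j *\<^sub>R nu j) | c. (\<Sum>j\<in>I. \<bar>c j\<bar>) = 1}"
  have "compact K"
    unfolding K_def by (rule compact_lincomb_unit_coeffs[OF \<open>finite I\<close>])
  moreover obtain i where "i \<in> I"
    using False by blast
  then have "(\<Sum>j\<in>I. of_bool (j = i) *\<^sub>R nu j) \<in> K"
    unfolding K_def using \<open>finite I\<close> by (auto intro!: exI[of _ "\<lambda>j. of_bool (j = i)"])
  then have "K \<noteq> {}"
    by blast
  ultimately obtain v0 where "v0 \<in> K" and v0_min: "\<forall>v\<in>K. norm v0 \<le> norm v"
    using continuous_attains_inf[OF _ _ continuous_on_norm_id] by blast
  then obtain c0 where c0: "(\<Sum>j\<in>I. \<bar>c0 j\<bar>) = 1" and v0: "v0 = (\<Sum>j\<in>I. c0 j *\<^sub>R nu j)"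
    unfolding K_def by blast
  have min: "norm v0 \<le> norm (\<Sum>j\<in>I. c j *\<^sub>R nu j)" if "(\<Sum>j\<in>I. \<bar>c j\<bar>) = 1" for c
    using v0_min that unfolding K_def by blast
  define \<delta> where "\<delta> = norm v0"
  have "v0 \<noteq> 0"
  proof
    assume "v0 = 0"
    then have "\<forall>j\<in>I. c0 j = 0"
      using indep[of c0] v0 by simp
    then show False
      using c0 by simp
  qed
  then have "\<delta> > 0"
    unfolding \<delta>_def by simp
  moreover have "\<delta> * (\<Sum>j\<in>I. \<bar>c j\<bar>) \<le> norm (\<Sum>j\<in>I. c j *\<^sub>R nu j)" for c
  proof (cases "(\<Sum>j\<in>I. \<bar>c j\<bar>) = 0")
    case False
    define N where "N = (\<Sum>j\<in>I. \<bar>c j\<bar>)"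
    have "N > 0"
      using False unfolding N_def by (simp add: order_le_neq_trans sum_nonneg)
    have "(\<Sum>j\<in>I. \<bar>c j / N\<bar>) = 1"
      using \<open>N > 0\<close> by (simp add: sum_divide_distrib[symmetric] N_def)
    then have "\<delta> \<le> norm (\<Sum>j\<in>I. (c j / N) *\<^sub>R nu j)"
      unfolding \<delta>_def by (rule min)
    also have "\<dots> = norm (inverse N *\<^sub>R (\<Sum>j\<in>I. c j *\<^sub>R nu j))"
      by (simp add: scaleR_sum_right divide_inverse_commute)
    also have "\<dots> = norm (\<Sum>j\<in>I. c j *\<^sub>R nu j) / N"
      using \<open>N > 0\<close> by (simp add: divide_inverse_commute)
    finally show ?thesis
      using \<open>N > 0\<close> by (simp add: N_def[symmetric] pos_le_divide_eq)
  qed simp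
  ultimately show thesis
    using that by blast
qed

lemma compact_lincomb_cball:
  fixes nu :: "'i \<Rightarrow> 'a::real_normed_vector"
  assumes "finite I" and indep: "\<And>c. (\<Sum>j\<in>I. c j *\<^sub>R nu j) = 0 \<Longrightarrow> \<forall>j\<in>I. c j = 0"
  shows "compact {(\<Sum>j\<in>I. c j *\<^sub>R nu j) | c. norm (\<Sum>j\<in>I. c j *\<^sub>R nu j) \<le> 1}"
proof -
  obtain \<delta> where "\<delta> > 0" and \<delta>: "\<And>c. \<delta> * (\<Sum>j\<in>I. \<bar>c j\<bar>) \<le> norm (\<Sum>j\<in>I. c j *\<^sub>R nu j)"
    using lincomb_norm_lower_bound[OF assms] by blast
  show ?thesis
  proof (rule compact_lincomb_image[OF \<open>finite I\<close>, where B="1 / \<delta>"])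
    show "(\<Sum>j\<in>I. \<bar>c j\<bar>) \<le> 1 / \<delta>" if "norm (\<Sum>j\<in>I. c j *\<^sub>R nu j) \<le> 1" for c
      using \<delta>[of c] that \<open>\<delta> > 0\<close> by (simp add: pos_le_divide_eq mult.commute)
    fix C :: "nat \<Rightarrow> 'i \<Rightarrow> real" and e :: "'i \<Rightarrow> real"
    assume "\<And>n. norm (\<Sum>j\<in>I. C n j *\<^sub>R nu j) \<le> 1" and e: "\<And>j. j \<in> I \<Longrightarrow> (\<lambda>n. C n j) \<longlonglongrightarrow> e j"
    moreover have "(\<lambda>n. norm (\<Sum>j\<in>I. C n j *\<^sub>R nu j)) \<longlonglongrightarrow> norm (\<Sum>j\<in>I. e j *\<^sub>R nu j)"
      by (auto intro!: tendsto_norm tendsto_sum tendsto_scaleR e)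
    ultimately show "norm (\<Sum>j\<in>I. e j *\<^sub>R nu j) \<le> 1"
      using LIMSEQ_le_const2 by blast
  qed
qed

lemma subspace_linear_le_mult_norm:
  fixes g :: "'a::real_normed_vector \<Rightarrow> real"
  assumes S: "subspace S" and g: "linear g" and le: "\<And>x. x \<in> S \<Longrightarrow> norm x \<le> 1 \<Longrightarrow> g x \<le> s"
    and "x \<in> S"
  shows "g x \<le> s * norm x"
proof (cases "x = 0")
  case True
  then show ?thesis using linear_0[OF g] by simp
next
  case False
  then have "g (x /\<^sub>R norm x) \<le> s"
    using le subspace_scale[OF S \<open>x \<in> S\<close>] by simp
  then show ?thesis
    using False by (simp add: linear_scale[OF g] field_simps)
qed

lemma subspace_range_lincomb:
  fixes nu :: "'i \<Rightarrow> 'a::real_vector"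
  shows "subspace (range (\<lambda>c. \<Sum>j\<in>I. c j *\<^sub>R nu j))" (is "subspace (range ?T)")
  unfolding subspace_def
proof (intro conjI ballI allI)
  show "0 \<in> range ?T"
    by (rule range_eqI[of _ _ "\<lambda>j. 0"]) simp
  show "x + y \<in> range ?T" if "x \<in> range ?T" "y \<in> range ?T" for x y
  proof -
    have "?T a + ?T b = ?T (\<lambda>j. a j + b j)" for a b
      by (simp add: scaleR_add_left sum.distrib)
    then show ?thesis
      using that by auto
  qed
  show "r *\<^sub>R x \<in> range ?T" if "x \<in> range ?T" for r x
  proof -
    have "r *\<^sub>R ?T a = ?T (\<lambda>j. r * a j)" for a
      by (simp add: scaleR_sum_right)
    then show ?thesis
      using that by auto
  qed
qed

lemma lincomb_sup_attained:
  fixes nu :: "'i \<Rightarrow> 'a::real_normed_vector" and g :: "'a \<Rightarrow>\<^sub>L real"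
  assumes "finite I" and indep: "\<And>c. (\<Sum>j\<in>I. c j *\<^sub>R nu j) = 0 \<Longrightarrow> \<forall>j\<in>I. c j = 0"
  obtains e where "norm (\<Sum>j\<in>I. e j *\<^sub>R nu j) \<le> 1" and "0 \<le> g (\<Sum>j\<in>I. e j *\<^sub>R nu j)"
    and "\<And>c. g (\<Sum>j\<in>I. c j *\<^sub>R nu j) \<le> g (\<Sum>j\<in>I. e j *\<^sub>R nu j) * norm (\<Sum>j\<in>I. c j *\<^sub>R nu j)"
proof -
  define K where "K = {(\<Sum>j\<in>I. c j *\<^sub>R nu j) | c. norm (\<Sum>j\<in>I. c j *\<^sub>R nu j) \<le> 1}"
  have "0 \<in> K"
    unfolding K_def by (intro CollectI exI[of _ "\<lambda>j. 0"]) simp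
  then have "K \<noteq> {}"
    by blast
  moreover have "compact K"
    unfolding K_def by (rule compact_lincomb_cball[OF assms])
  ultimately obtain v where "v \<in> K" and v_max: "\<And>w. w \<in> K \<Longrightarrow> g w \<le> g v"
    using continuous_attains_sup[of K "blinfun_apply g"]
      linear_continuous_on[OF blinfun.bounded_linear_right] by blast
  then obtain e where e: "norm (\<Sum>j\<in>I. e j *\<^sub>R nu j) \<le> 1" and v: "v = (\<Sum>j\<in>I. e j *\<^sub>R nu j)"
    unfolding K_def by blast
  have "g (\<Sum>j\<in>I. c j *\<^sub>R nu j) \<le> g v * norm (\<Sum>j\<in>I. c j *\<^sub>R nu j)" for c
  proof (rule subspace_linear_le_mult_norm[OF subspace_range_lincomb
        bounded_linear.linear[OF blinfun.bounded_linear_right]])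
    show "g w \<le> g v" if "w \<in> range (\<lambda>c. \<Sum>j\<in>I. c j *\<^sub>R nu j)" and "norm w \<le> 1" for w
      using v_max that unfolding K_def by blast
  qed simp
  moreover have "0 \<le> g v"
    using v_max[OF \<open>0 \<in> K\<close>] by (simp add: blinfun.zero_right)
  ultimately show thesis
    using that e v by blast
qed

section \<open>Subgradients of the norm\<close>

lemma subdiff_norm_iff:
  fixes v :: "'a::real_normed_vector"
  shows "mu \<in> subdiff norm v \<longleftrightarrow> norm mu \<le> 1 \<and> mu v = norm v"
proof
  assume "mu \<in> subdiff norm v"
  then have sub: "mu (z - v) \<le> norm z - norm v" for z
    unfolding subdiff_def by blast
  have le: "mu w \<le> norm w" for w
    using sub[of "v + w"] norm_triangle_ineq[of v w] by simp
  have "\<bar>mu w\<bar> \<le> norm w" for w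
    using le[of w] le[of "- w"] by (simp add: blinfun.minus_right)
  then have "norm mu \<le> 1"
    by (intro norm_blinfun_bound) auto
  moreover have "norm v \<le> mu v"
    using sub[of 0] by (simp add: blinfun.minus_right)
  ultimately show "norm mu \<le> 1 \<and> mu v = norm v"
    using le[of v] by simp
next
  assume "norm mu \<le> 1 \<and> mu v = norm v"
  then have "mu z \<le> norm z" for z
    using norm_blinfun[of mu z] mult_right_mono[of "norm mu" 1 "norm z"] by simp
  with \<open>norm mu \<le> 1 \<and> mu v = norm v\<close> show "mu \<in> subdiff norm v"
    unfolding subdiff_def by (simp add: blinfun.diff_right)
qed

lemma subdiff_norm_if_norming:
  fixes g :: "'a::real_normed_vector \<Rightarrow>\<^sub>L real"
  assumes "norm v \<le> 1" and "norm g \<le> g v"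
  shows "g /\<^sub>R norm g \<in> subdiff norm (norm g *\<^sub>R v)"
    and "g = norm (norm g *\<^sub>R v) *\<^sub>R (g /\<^sub>R norm g)"
proof -
  have "g v \<le> norm g * norm v"
    using norm_blinfun[of g v] by simp
  moreover have "norm g * norm v \<le> norm g"
    using \<open>norm v \<le> 1\<close> by (simp add: mult_left_le)
  ultimately have "g v = norm g" and "norm g * norm v = norm g"
    using \<open>norm g \<le> g v\<close> by linarith+
  moreover from this(2) have "g = 0 \<or> norm v = 1"
    by (simp add: mult_cancel_left2)
  ultimately show "g /\<^sub>R norm g \<in> subdiff norm (norm g *\<^sub>R v)"
    and "g = norm (norm g *\<^sub>R v) *\<^sub>R (g /\<^sub>R norm g)"
    by (cases "g = 0"; simp add: subdiff_norm_iff blinfun.scaleR_right blinfun.scaleR_left)+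
qed

section \<open>Minimum norm interpolation\<close>

lemma interp_set_apply_lincomb:
  assumes "f \<in> interp_set J nu m y"
  shows "J f (\<Sum>j\<in>{1..m}. c j *\<^sub>R nu j) = (\<Sum>j\<in>{1..m}. c j * y j)"
  using assms unfolding interp_set_def by (simp add: blinfun.sum_right blinfun.scaleR_right)

lemma is_mni_solution_if_norming:
  assumes isometry: "\<And>h. norm (J h) = norm h" and f: "f \<in> interp_set J nu m y"
    and v: "v = (\<Sum>j\<in>{1..m}. c j *\<^sub>R nu j)"
    and mu: "mu \<in> subdiff norm v" and Jf: "J f = norm v *\<^sub>R mu"
  shows "is_mni_solution J nu m y f"
proof -
  have mu_norm: "norm mu \<le> 1" and mu_v: "mu v = norm v"
    using mu by (auto simp: subdiff_norm_iff)
  have "norm f \<le> norm h" if h: "h \<in> interp_set J nu m y" for h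
  proof (cases "v = 0")
    case True
    then show ?thesis using isometry[of f] Jf by simp
  next
    case False
    have "norm v * norm v = J f v"
      using Jf mu_v by (simp add: blinfun.scaleR_left)
    also have "\<dots> = J h v"
      unfolding v using interp_set_apply_lincomb[OF f] interp_set_apply_lincomb[OF h] by simp
    also have "\<dots> \<le> norm h * norm v"
      using norm_blinfun[of "J h" v] isometry[of h] by simp
    finally have "norm v \<le> norm h"
      using False by simp
    moreover have "norm f \<le> norm v"
      using isometry[of f] Jf mu_norm mult_left_le[of "norm mu" "norm v"] by simp
    ultimately show ?thesis by linarith
  qed
  then have "Inf (norm ` interp_set J nu m y) = norm f"
    using f by (intro cInf_eq_minimum) auto
  then show ?thesis
    unfolding is_mni_solution_def using f by simp
qed

lemma is_mni_solution_norm_le: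
  fixes J :: "'b::real_normed_vector \<Rightarrow> ('p::real_normed_vector \<Rightarrow>\<^sub>L real)"
    and \<phi> :: "'p \<Rightarrow>\<^sub>L real"
  assumes "surj J" and isometry: "\<And>h. norm (J h) = norm h" and f: "is_mni_solution J nu m y f"
    and agree: "\<And>j. j \<in> {1..m} \<Longrightarrow> \<phi> (nu j) = J f (nu j)"
  shows "norm f \<le> norm \<phi>"
proof -
  obtain h where h: "J h = \<phi>"
    using \<open>surj J\<close> by (metis surjD)
  have "h \<in> interp_set J nu m y"
    using f agree h unfolding is_mni_solution_def interp_set_def by simp
  moreover have "bdd_below (norm ` interp_set J nu m y)"
    by (rule bdd_belowI[of _ 0]) auto
  ultimately have "norm f \<le> norm h"
    using f unfolding is_mni_solution_def by (simp add: cInf_lower)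
  also have "norm h = norm \<phi>"
    using isometry[of h] h by simp
  finally show ?thesis .
qed

lemma norming_if_is_mni_solution:
  fixes J :: "'b::real_normed_vector \<Rightarrow> ('p::real_normed_vector \<Rightarrow>\<^sub>L real)"
  assumes "surj J" and isometry: "\<And>h. norm (J h) = norm h"
    and indep: "\<And>c. (\<Sum>j\<in>{1..m}. c j *\<^sub>R nu j) = 0 \<Longrightarrow> \<forall>j\<in>{1..m}. c j = 0"
    and f: "is_mni_solution J nu m y f"
  obtains c mu where "mu \<in> subdiff norm (\<Sum>j\<in>{1..m}. c j *\<^sub>R nu j)"
    and "J f = norm (\<Sum>j\<in>{1..m}. c j *\<^sub>R nu j) *\<^sub>R mu"
proof -
  define T where "T c = (\<Sum>j\<in>{1..m}. c j *\<^sub>R nu j)" for c :: "nat \<Rightarrow> real"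
  obtain e where e: "norm (T e) \<le> 1" and "0 \<le> J f (T e)"
    and "\<And>c. J f (T c) \<le> J f (T e) * norm (T c)"
    using lincomb_sup_attained[OF _ indep, where g = "J f"] unfolding T_def by auto
  then obtain \<phi> :: "'p \<Rightarrow>\<^sub>L real" where \<phi>: "\<forall>x\<in>range T. \<phi> x = J f x"
    and "norm \<phi> \<le> J f (T e)"
    using hahn_banach_norm[OF subspace_range_lincomb bounded_linear.linear[OF blinfun.bounded_linear_right]]
    unfolding T_def[abs_def] by blast
  have "nu j \<in> range T" if "j \<in> {1..m}" for j
  proof
    show "nu j = T (\<lambda>i. of_bool (i = j))"
      unfolding T_def using that by (simp add: of_bool_def if_distrib[of "\<lambda>r. r *\<^sub>R _"] cong: if_cong)
  qed simp
  then have "norm f \<le> norm \<phi>"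
    using \<phi> by (intro is_mni_solution_norm_le[OF \<open>surj J\<close> isometry f]) blast
  with \<open>norm \<phi> \<le> J f (T e)\<close> have "norm (J f) \<le> J f (T e)"
    unfolding isometry by simp
  have "T (\<lambda>j. norm (J f) * e j) = norm (J f) *\<^sub>R T e"
    unfolding T_def by (simp add: scaleR_sum_right)
  with subdiff_norm_if_norming[OF e \<open>norm (J f) \<le> J f (T e)\<close>] show thesis
    using that[of "J f /\<^sub>R norm (J f)" "\<lambda>j. norm (J f) * e j"] unfolding T_def by simp
qed

theorem mainTheorem7:
  fixes J :: "'b::banach \<Rightarrow> ('p::real_normed_vector \<Rightarrow>\<^sub>L real)"
    and nu :: "nat \<Rightarrow> 'p" and m :: nat and y :: "nat \<Rightarrow> real" and f :: 'b
  assumes "predual_iso J"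
    and "\<And>c. (\<Sum>j\<in>{1..m}. c j *\<^sub>R nu j) = 0 \<Longrightarrow> \<forall>j\<in>{1..m}. c j = 0"
  shows "is_mni_solution J nu m y f \<longleftrightarrow>
           f \<in> interp_set J nu m y \<and>
           (\<exists>c :: nat \<Rightarrow> real.
              J f \<in> (\<lambda>mu. norm (\<Sum>j\<in>{1..m}. c j *\<^sub>R nu j) *\<^sub>R mu) `
                      subdiff norm (\<Sum>j\<in>{1..m}. c j *\<^sub>R nu j))"
proof -
  have "surj J" and isometry: "\<And>h. norm (J h) = norm h"
    using assms(1) unfolding predual_iso_def bij_def by auto
  show ?thesis
  proof
    assume f: "is_mni_solution J nu m y f"
    then obtain c mu where "mu \<in> subdiff norm (\<Sum>j\<in>{1..m}. c j *\<^sub>R nu j)"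
      and "J f = norm (\<Sum>j\<in>{1..m}. c j *\<^sub>R nu j) *\<^sub>R mu"
      using norming_if_is_mni_solution[OF \<open>surj J\<close> isometry assms(2)] by blast
    with f show "f \<in> interp_set J nu m y \<and> (\<exists>c. J f \<in> (\<lambda>mu. norm (\<Sum>j\<in>{1..m}. c j *\<^sub>R nu j) *\<^sub>R mu) `
        subdiff norm (\<Sum>j\<in>{1..m}. c j *\<^sub>R nu j))"
      unfolding is_mni_solution_def by blast
  next
    assume "f \<in> interp_set J nu m y \<and> (\<exists>c. J f \<in> (\<lambda>mu. norm (\<Sum>j\<in>{1..m}. c j *\<^sub>R nu j) *\<^sub>R mu) `
        subdiff norm (\<Sum>j\<in>{1..m}. c j *\<^sub>R nu j))"
    then show "is_mni_solution J nu m y f"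
      using is_mni_solution_if_norming[OF isometry _ refl] by blast
  qed
qed

end
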